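(* For $n\ge1$, $\operatorname{zir}(P_n)=\operatorname{Z}(P_n)=1$. For $n\ge4$, $\overline{\operatorname{Z}}(P_n)=2$. For $n\ge5$, $\operatorname{ZIR}(P_n)=\lfloor (n-1)/2\rfloor$.
   Context: $P_n$ is the path on $n$ vertices. Zero forcing: a blue vertex $u$ changes a white vertex $w$ to blue if $w$ is the only white neighbor of $u$; $B$ is a zero forcing set if from blue set $B$ eventually all vertices are blue; $\operatorname{Z}(G)$ is the minimum size of a zero forcing set and $\overline{\operatorname{Z}}(G)$ the maximum size of an inclusion-minimal zero forcing set. A nonempty $F\subseteq V(G)$ is a fort if every $v\notin F$ has $|N(v)\cap F|\ne1$. A private fort of $x\in S$ relative to $S$ is a fort $F$ with $S\cap F=\{x\}$; $S$ is a ZIr-set if every element of $S$ has a private fort. $\operatorname{zir}(G)$ / $\operatorname{ZIR}(G)$ are the minimum / maximum cardinality of an inclusion-maximal ZIr-set. *)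

theory Defs
  imports Main
begin

text \<open>A simple graph is given by a vertex set V and an adjacency relation adj
  (assumed symmetric and irreflexive where relevant; for paths this holds).\<close>

definition nbhd :: "'a set \<Rightarrow> ('a \<Rightarrow> 'a \<Rightarrow> bool) \<Rightarrow> 'a \<Rightarrow> 'a set" where
  "nbhd V adj v = {u \<in> V. adj v u}"

inductive zf_blue :: "'a set \<Rightarrow> ('a \<Rightarrow> 'a \<Rightarrow> bool) \<Rightarrow> 'a set \<Rightarrow> 'a \<Rightarrow> bool"
  for V adj B where
  init: "b \<in> B \<Longrightarrow> b \<in> V \<Longrightarrow> zf_blue V adj B b"
| force: "zf_blue V adj B u \<Longrightarrow> w \<in> nbhd V adj u \<Longrightarrow>
          (\<forall>x\<in>nbhd V adj u. x \<noteq> w \<longrightarrow> zf_blue V adj B x) \<Longrightarrow> zf_blue V adj B w"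

definition zero_forcing_set :: "'a set \<Rightarrow> ('a \<Rightarrow> 'a \<Rightarrow> bool) \<Rightarrow> 'a set \<Rightarrow> bool" where
  "zero_forcing_set V adj B \<longleftrightarrow> B \<subseteq> V \<and> (\<forall>v\<in>V. zf_blue V adj B v)"

definition minimal_zero_forcing_set :: "'a set \<Rightarrow> ('a \<Rightarrow> 'a \<Rightarrow> bool) \<Rightarrow> 'a set \<Rightarrow> bool" where
  "minimal_zero_forcing_set V adj B \<longleftrightarrow>
     zero_forcing_set V adj B \<and> (\<forall>B'. B' \<subset> B \<longrightarrow> \<not> zero_forcing_set V adj B')"

definition Z :: "'a set \<Rightarrow> ('a \<Rightarrow> 'a \<Rightarrow> bool) \<Rightarrow> nat" where
  "Z V adj = Min (card ` {B. zero_forcing_set V adj B})"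

definition Zbar :: "'a set \<Rightarrow> ('a \<Rightarrow> 'a \<Rightarrow> bool) \<Rightarrow> nat" where
  "Zbar V adj = Max (card ` {B. minimal_zero_forcing_set V adj B})"

definition fort :: "'a set \<Rightarrow> ('a \<Rightarrow> 'a \<Rightarrow> bool) \<Rightarrow> 'a set \<Rightarrow> bool" where
  "fort V adj F \<longleftrightarrow> F \<noteq> {} \<and> F \<subseteq> V \<and>
     (\<forall>v\<in>V - F. card (nbhd V adj v \<inter> F) \<noteq> 1)"

definition private_fort :: "'a set \<Rightarrow> ('a \<Rightarrow> 'a \<Rightarrow> bool) \<Rightarrow> 'a set \<Rightarrow> 'a \<Rightarrow> 'a set \<Rightarrow> bool" where
  "private_fort V adj S x F \<longleftrightarrow> fort V adj F \<and> S \<inter> F = {x}"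

definition ZIr_set :: "'a set \<Rightarrow> ('a \<Rightarrow> 'a \<Rightarrow> bool) \<Rightarrow> 'a set \<Rightarrow> bool" where
  "ZIr_set V adj S \<longleftrightarrow> S \<subseteq> V \<and> (\<forall>x\<in>S. \<exists>F. private_fort V adj S x F)"

definition maximal_ZIr_set :: "'a set \<Rightarrow> ('a \<Rightarrow> 'a \<Rightarrow> bool) \<Rightarrow> 'a set \<Rightarrow> bool" where
  "maximal_ZIr_set V adj S \<longleftrightarrow>
     ZIr_set V adj S \<and> (\<forall>S'. S \<subset> S' \<longrightarrow> \<not> ZIr_set V adj S')"

definition zir :: "'a set \<Rightarrow> ('a \<Rightarrow> 'a \<Rightarrow> bool) \<Rightarrow> nat" where
  "zir V adj = Min (card ` {S. maximal_ZIr_set V adj S})"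

definition ZIR :: "'a set \<Rightarrow> ('a \<Rightarrow> 'a \<Rightarrow> bool) \<Rightarrow> nat" where
  "ZIR V adj = Max (card ` {S. maximal_ZIr_set V adj S})"

definition path_V :: "nat \<Rightarrow> nat set" where
  "path_V n = {0..<n}"

definition path_adj :: "nat \<Rightarrow> nat \<Rightarrow> bool" where
  "path_adj i j \<longleftrightarrow> i + 1 = j \<or> j + 1 = i"

end

theory Submission
  imports Defs
begin

text \<open>On a path every fort contains both end vertices and meets every pair of
  adjacent vertices, since a vertex outside a fort next to the leftmost (rightmost) fort
  vertex, or next to a run of two non-fort vertices, would see exactly one fort vertex.
  Dually, a blue set containing no end vertex and no two adjacent vertices cannot force
  anything. So a ZIr-set, or a minimal zero forcing set, lies within an end vertex or
  within a pair of adjacent vertices, or else is an independent set of interior vertices;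
  such a set is never zero forcing and has at most \<lfloor>(n-1)/2\<rfloor> elements, a bound attained by the odd
  vertices, each of which has the private fort formed by it and the even vertices.\<close>

lemma finite_card_image_subsets:
  assumes "finite V" "\<And>B. P B \<Longrightarrow> B \<subseteq> V"
  shows "finite (card ` Collect P)"
proof -
  have "Collect P \<subseteq> Pow V" using assms(2) by blast
  then have "finite (Collect P)" using assms(1) by (meson finite_Pow_iff finite_subset)
  then show ?thesis by (rule finite_imageI)
qed

lemma zf_blue_in_vertices: "zf_blue V adj B v \<Longrightarrow> v \<in> V"
proof (induction rule: zf_blue.induct)
  case (init b)
  then show ?case by simp
next
  case (force u w)
  show ?case using \<open>w \<in> nbhd V adj u\<close> by (simp add: nbhd_def)
qed

lemma not_zf_blue_empty: "\<not> zf_blue V adj {} v"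
proof
  assume "zf_blue V adj {} v"
  then show False by induction simp_all
qed

lemma zero_forcing_set_nonempty:
  assumes "V \<noteq> {}" "zero_forcing_set V adj B"
  shows "B \<noteq> {}"
  using assms not_zf_blue_empty unfolding zero_forcing_set_def by fastforce

lemma minimal_zero_forcing_set_subset_eq:
  assumes "minimal_zero_forcing_set V adj B" "zero_forcing_set V adj C" "C \<subseteq> B"
  shows "C = B"
  using assms unfolding minimal_zero_forcing_set_def by blast

lemma fort_no_unique_neighbour:
  assumes "fort V adj F" "v \<in> V" "v \<notin> F"
  shows "nbhd V adj v \<inter> F \<noteq> {u}"
proof -
  have "card (nbhd V adj v \<inter> F) \<noteq> 1" using assms unfolding fort_def by blast
  then show ?thesis by auto
qed

lemma ZIr_set_subset_if_forts_meet:
  assumes "ZIr_set V adj S" "T \<subseteq> S" "\<And>F. fort V adj F \<Longrightarrow> F \<inter> T \<noteq> {}"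
  shows "S \<subseteq> T"
proof
  fix x assume "x \<in> S"
  then obtain F where "fort V adj F" "S \<inter> F = {x}"
    using assms(1) by (auto simp: ZIr_set_def private_fort_def)
  with assms(2) assms(3)[OF \<open>fort V adj F\<close>] show "x \<in> T" by auto
qed

lemma ZIr_set_singleton:
  assumes "v \<in> V"
  shows "ZIr_set V adj {v}"
proof -
  have "private_fort V adj {v} v V" using assms by (auto simp: private_fort_def fort_def)
  then show ?thesis using assms by (auto simp: ZIr_set_def)
qed

lemma maximal_ZIr_set_nonempty:
  assumes "v \<in> V" "maximal_ZIr_set V adj S"
  shows "S \<noteq> {}"
  using assms ZIr_set_singleton[OF assms(1)] unfolding maximal_ZIr_set_def by blast

lemma ZIr_setI_complement_forts:
  assumes "S \<subseteq> V" "\<And>x. x \<in> S \<Longrightarrow> fort V adj (V - S \<union> {x})"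
  shows "ZIr_set V adj S"
proof -
  have "private_fort V adj S x (V - S \<union> {x})" if "x \<in> S" for x
    using assms(2)[OF that] that by (auto simp: private_fort_def)
  then show ?thesis using assms(1) unfolding ZIr_set_def by blast
qed

lemma nbhd_path: "nbhd (path_V n) path_adj u = {v. v < n \<and> (u + 1 = v \<or> v + 1 = u)}"
  by (auto simp: nbhd_def path_V_def path_adj_def)

lemma zf_blue_path_force_up:
  assumes blue: "zf_blue (path_V n) path_adj B k"
    and left: "k = 0 \<or> zf_blue (path_V n) path_adj B (k - 1)"
    and "k + 1 < n"
  shows "zf_blue (path_V n) path_adj B (k + 1)"
proof (rule zf_blue.force[OF blue])
  show "k + 1 \<in> nbhd (path_V n) path_adj k" using \<open>k + 1 < n\<close> by (simp add: nbhd_path)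
  show "\<forall>x\<in>nbhd (path_V n) path_adj k. x \<noteq> k + 1 \<longrightarrow> zf_blue (path_V n) path_adj B x"
    using left by (auto simp: nbhd_path)
qed

lemma zf_blue_path_force_down:
  assumes blue: "zf_blue (path_V n) path_adj B (k + 1)"
    and right: "n \<le> k + 2 \<or> zf_blue (path_V n) path_adj B (k + 2)"
  shows "zf_blue (path_V n) path_adj B k"
proof (rule zf_blue.force[OF blue])
  have "k + 1 < n" using zf_blue_in_vertices[OF blue] by (simp add: path_V_def)
  then show "k \<in> nbhd (path_V n) path_adj (k + 1)" by (simp add: nbhd_path)
  show "\<forall>x\<in>nbhd (path_V n) path_adj (k + 1). x \<noteq> k \<longrightarrow> zf_blue (path_V n) path_adj B x"
    using right by (auto simp: nbhd_path)
qed

lemma zf_blue_path_upwards: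
  assumes "zf_blue (path_V n) path_adj B a" "a = 0 \<or> zf_blue (path_V n) path_adj B (a - 1)"
    and "a \<le> k" "k < n"
  shows "zf_blue (path_V n) path_adj B k"
proof -
  have "zf_blue (path_V n) path_adj B k \<and> (k = 0 \<or> zf_blue (path_V n) path_adj B (k - 1))"
    using \<open>a \<le> k\<close> \<open>k < n\<close>
  proof (induction k rule: dec_induct)
    case base
    then show ?case using assms by blast
  next
    case (step m)
    then show ?case using zf_blue_path_force_up[of n B m] by simp
  qed
  then show ?thesis ..
qed

lemma zf_blue_path_downwards:
  assumes "zf_blue (path_V n) path_adj B a" "n \<le> a + 1 \<or> zf_blue (path_V n) path_adj B (a + 1)"
    and "k \<le> a"
  shows "zf_blue (path_V n) path_adj B k"
proof -
  have "zf_blue (path_V n) path_adj B k \<and> (n \<le> k + 1 \<or> zf_blue (path_V n) path_adj B (k + 1))"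
    using \<open>k \<le> a\<close>
  proof (induction k rule: inc_induct)
    case base
    then show ?case using assms by blast
  next
    case (step m)
    then show ?case using zf_blue_path_force_down[of n B m] by simp
  qed
  then show ?thesis ..
qed

lemma zero_forcing_set_path_first:
  assumes "0 < n"
  shows "zero_forcing_set (path_V n) path_adj {0}"
  using assms zf_blue_path_upwards[of n "{0}" 0] zf_blue.init[of 0 "{0}" "path_V n" path_adj]
  by (auto simp: zero_forcing_set_def path_V_def)

lemma zero_forcing_set_path_last:
  assumes "0 < n"
  shows "zero_forcing_set (path_V n) path_adj {n - 1}"
  using assms zf_blue_path_downwards[of n "{n - 1}" "n - 1"]
    zf_blue.init[of "n - 1" "{n - 1}" "path_V n" path_adj]
  by (auto simp: zero_forcing_set_def path_V_def)

lemma zero_forcing_set_path_adjacent_pair: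
  assumes "b + 1 < n"
  shows "zero_forcing_set (path_V n) path_adj {b, b + 1}"
  unfolding zero_forcing_set_def
proof (intro conjI ballI)
  show "{b, b + 1} \<subseteq> path_V n" using assms by (auto simp: path_V_def)
  have blue: "zf_blue (path_V n) path_adj {b, b + 1} b" "zf_blue (path_V n) path_adj {b, b + 1} (b + 1)"
    using assms by (auto intro: zf_blue.init simp: path_V_def)
  fix v assume "v \<in> path_V n"
  then show "zf_blue (path_V n) path_adj {b, b + 1} v"
    using blue zf_blue_path_upwards[of n _ "b + 1" v] zf_blue_path_downwards[of n _ b v]
    by (cases "b + 1 \<le> v") (auto simp: path_V_def)
qed

lemma fort_path_contains_first:
  assumes F: "fort (path_V n) path_adj F"
  shows "0 \<in> F"
proof (rule ccontr)
  assume "0 \<notin> F"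
  have "F \<subseteq> {0..<n}" "F \<noteq> {}" using F by (auto simp: fort_def path_V_def)
  then have "finite F" using finite_subset by blast
  define f where "f = Min F"
  have f: "f \<in> F" "\<And>x. x \<in> F \<Longrightarrow> f \<le> x"
    using \<open>finite F\<close> \<open>F \<noteq> {}\<close> by (simp_all add: f_def)
  with \<open>0 \<notin> F\<close> \<open>F \<subseteq> {0..<n}\<close> have "0 < f" "f < n" by (fastforce intro: gr0I)+
  have "nbhd (path_V n) path_adj (f - 1) \<inter> F = {f}"
    using f \<open>0 < f\<close> \<open>f < n\<close> by (force simp: nbhd_path)
  moreover have "f - 1 \<notin> F" using f(2) \<open>0 < f\<close> by force
  ultimately show False
    using fort_no_unique_neighbour[OF F, of "f - 1" f] \<open>f < n\<close> by (simp add: path_V_def less_imp_diff_less)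
qed

lemma fort_path_contains_last:
  assumes F: "fort (path_V n) path_adj F"
  shows "n - 1 \<in> F"
proof (rule ccontr)
  assume "n - 1 \<notin> F"
  have "F \<subseteq> {0..<n}" "F \<noteq> {}" using F by (auto simp: fort_def path_V_def)
  then have "finite F" using finite_subset by blast
  define f where "f = Max F"
  have f: "f \<in> F" "\<And>x. x \<in> F \<Longrightarrow> x \<le> f"
    using \<open>finite F\<close> \<open>F \<noteq> {}\<close> by (simp_all add: f_def)
  with \<open>F \<subseteq> {0..<n}\<close> have "f < n" by auto
  with \<open>f \<in> F\<close> \<open>n - 1 \<notin> F\<close> have "f + 1 < n" by (cases "f = n - 1") auto
  have "nbhd (path_V n) path_adj (f + 1) \<inter> F = {f}"
    using f \<open>f + 1 < n\<close> by (force simp: nbhd_path)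
  moreover have "f + 1 \<notin> F" using f(2) by force
  ultimately show False
    using fort_no_unique_neighbour[OF F, of "f + 1" f] \<open>f + 1 < n\<close> by (simp add: path_V_def)
qed

lemma fort_path_meets_adjacent_pair:
  assumes F: "fort (path_V n) path_adj F"
  shows "b + 1 < n \<Longrightarrow> b \<in> F \<or> b + 1 \<in> F"
proof (induction b)
  case 0
  then show ?case using fort_path_contains_first[OF F] by simp
next
  case (Suc b)
  show ?case
  proof (rule ccontr)
    assume "\<not> (Suc b \<in> F \<or> Suc b + 1 \<in> F)"
    then have out: "Suc b \<notin> F" "Suc b + 1 \<notin> F" by simp_all
    with Suc have "b \<in> F" by simp
    with out Suc.prems have "nbhd (path_V n) path_adj (Suc b) \<inter> F = {b}"
      by (auto simp: nbhd_path)
    then show False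
      using fort_no_unique_neighbour[OF F, of "Suc b" b] out Suc.prems by (simp add: path_V_def)
  qed
qed

definition path_interior_independent :: "nat \<Rightarrow> nat set \<Rightarrow> bool" where
  "path_interior_independent n B \<longleftrightarrow> (\<forall>b\<in>B. 0 < b \<and> b + 1 < n \<and> b + 1 \<notin> B)"

lemma path_subset_cases:
  assumes "B \<subseteq> path_V n"
  obtains "0 \<in> B" | "n - 1 \<in> B" | b where "b \<in> B" "b + 1 \<in> B" | "path_interior_independent n B"
proof (cases "0 \<in> B \<or> n - 1 \<in> B \<or> (\<exists>b\<in>B. b + 1 \<in> B)")
  case True
  then show ?thesis using that by blast
next
  case False
  have "path_interior_independent n B"
    unfolding path_interior_independent_def
  proof
    fix b assume "b \<in> B"
    with False have "b \<noteq> 0" "b \<noteq> n - 1" "b + 1 \<notin> B" by metis+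
    moreover have "b < n" using \<open>b \<in> B\<close> assms by (auto simp: path_V_def)
    ultimately show "0 < b \<and> b + 1 < n \<and> b + 1 \<notin> B" by auto
  qed
  then show ?thesis using that by blast
qed

lemma zf_blue_path_interior_independent:
  assumes indep: "path_interior_independent n B"
  shows "zf_blue (path_V n) path_adj B v \<Longrightarrow> v \<in> B"
proof (induction rule: zf_blue.induct)
  case (init b)
  then show ?case by simp
next
  case (force u w)
  have "0 < u" "u + 1 < n" "u + 1 \<notin> B"
    using indep \<open>u \<in> B\<close> unfolding path_interior_independent_def by blast+
  moreover have "u - 1 \<notin> B"
  proof
    assume "u - 1 \<in> B"
    then have "u - 1 + 1 \<notin> B" using indep unfolding path_interior_independent_def by blast
    with \<open>0 < u\<close> \<open>u \<in> B\<close> show False by simp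
  qed
  moreover have "u - 1 \<in> nbhd (path_V n) path_adj u" "u + 1 \<in> nbhd (path_V n) path_adj u"
    using \<open>0 < u\<close> \<open>u + 1 < n\<close> by (auto simp: nbhd_path)
  moreover have "u - 1 \<noteq> w \<or> u + 1 \<noteq> w" by arith
  ultimately show ?case using force.IH(2) by blast
qed

lemma not_zero_forcing_set_path_interior_independent:
  assumes "0 < n" "path_interior_independent n B"
  shows "\<not> zero_forcing_set (path_V n) path_adj B"
proof
  assume "zero_forcing_set (path_V n) path_adj B"
  then have "zf_blue (path_V n) path_adj B 0" using \<open>0 < n\<close> by (simp add: zero_forcing_set_def path_V_def)
  then have "0 \<in> B" using zf_blue_path_interior_independent[OF assms(2)] by blast
  then show False using assms(2) by (auto simp: path_interior_independent_def)
qed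

text \<open>Halving the indices pairs each interior vertex with a neighbour; no two
  vertices of an independent set can land in the same pair.\<close>
lemma card_path_interior_independent:
  assumes indep: "path_interior_independent n B"
  shows "card B \<le> (n - 1) div 2"
proof -
  define h :: "nat \<Rightarrow> nat" where "h x = (x - 1) div 2" for x
  have bounds: "0 < x" "x + 1 < n" if "x \<in> B" for x
    using indep that by (auto simp: path_interior_independent_def)
  have "inj_on h B"
  proof (rule inj_onI)
    fix x y assume "x \<in> B" "y \<in> B" "h x = h y"
    have "x = y \<or> x = y + 1 \<or> y = x + 1"
      using bounds[OF \<open>x \<in> B\<close>] bounds[OF \<open>y \<in> B\<close>] \<open>h x = h y\<close>
        div_mult_mod_eq[of "x - 1" 2] div_mult_mod_eq[of "y - 1" 2]
        mod_less_divisor[of 2 "x - 1"] mod_less_divisor[of 2 "y - 1"]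
      unfolding h_def by linarith
    then show "x = y"
      using indep \<open>x \<in> B\<close> \<open>y \<in> B\<close> by (auto simp: path_interior_independent_def)
  qed
  moreover have "h x < (n - 1) div 2" if "x \<in> B" for x
  proof -
    have "h x < (x - 1 + 2) div 2" unfolding h_def by simp
    also have "\<dots> \<le> (n - 1) div 2" using bounds[OF that] by (intro div_le_mono) linarith
    finally show ?thesis .
  qed
  then have "h ` B \<subseteq> {..<(n - 1) div 2}" by auto
  ultimately show ?thesis
    using card_image[of h B] card_mono[of "{..<(n - 1) div 2}" "h ` B"] by simp
qed

lemma minimal_zero_forcing_set_path_interior_pair:
  assumes "0 < b" "b + 2 < n"
  shows "minimal_zero_forcing_set (path_V n) path_adj {b, b + 1}"
  unfolding minimal_zero_forcing_set_def
proof (intro conjI allI impI)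
  show "zero_forcing_set (path_V n) path_adj {b, b + 1}"
    using assms by (intro zero_forcing_set_path_adjacent_pair) simp
  fix B assume "B \<subset> {b, b + 1}"
  then have "path_interior_independent n B"
    using assms by (auto simp: path_interior_independent_def)
  then show "\<not> zero_forcing_set (path_V n) path_adj B"
    using assms by (intro not_zero_forcing_set_path_interior_independent) simp_all
qed

lemma card_minimal_zero_forcing_set_path:
  assumes "0 < n" and B: "minimal_zero_forcing_set (path_V n) path_adj B"
  shows "card B \<le> 2"
proof -
  have zf: "zero_forcing_set (path_V n) path_adj B" using B by (simp add: minimal_zero_forcing_set_def)
  then have "B \<subseteq> path_V n" by (simp add: zero_forcing_set_def)
  then show ?thesis
  proof (cases rule: path_subset_cases)
    case 1
    then have "{0} = B"
      using minimal_zero_forcing_set_subset_eq[OF B zero_forcing_set_path_first[OF \<open>0 < n\<close>]] by blast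
    then show ?thesis by auto
  next
    case 2
    then have "{n - 1} = B"
      using minimal_zero_forcing_set_subset_eq[OF B zero_forcing_set_path_last[OF \<open>0 < n\<close>]] by blast
    then show ?thesis by auto
  next
    case (3 b)
    have "b + 1 < n" using \<open>b + 1 \<in> B\<close> \<open>B \<subseteq> path_V n\<close> by (auto simp: path_V_def)
    then have "{b, b + 1} = B"
      using minimal_zero_forcing_set_subset_eq[OF B zero_forcing_set_path_adjacent_pair] 3 by blast
    then show ?thesis by auto
  next
    case 4
    then show ?thesis using not_zero_forcing_set_path_interior_independent[OF \<open>0 < n\<close>] zf by blast
  qed
qed

lemma card_ZIr_set_path:
  assumes "5 \<le> n" and S: "ZIr_set (path_V n) path_adj S"
  shows "card S \<le> (n - 1) div 2"
proof -
  have "2 \<le> (n - 1) div 2" using \<open>5 \<le> n\<close> by (simp add: le_div_geq)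
  have "S \<subseteq> path_V n" using S by (simp add: ZIr_set_def)
  then show ?thesis
  proof (cases rule: path_subset_cases)
    case 1
    then have "S \<subseteq> {0}"
      using ZIr_set_subset_if_forts_meet[OF S] fort_path_contains_first by blast
    then have "card S \<le> 1" using card_mono[of "{0}" S] by simp
    with \<open>2 \<le> (n - 1) div 2\<close> show ?thesis by linarith
  next
    case 2
    then have "S \<subseteq> {n - 1}"
      using ZIr_set_subset_if_forts_meet[OF S] fort_path_contains_last by blast
    then have "card S \<le> 1" using card_mono[of "{n - 1}" S] by simp
    with \<open>2 \<le> (n - 1) div 2\<close> show ?thesis by linarith
  next
    case (3 b)
    have "b + 1 < n" using \<open>b + 1 \<in> S\<close> \<open>S \<subseteq> path_V n\<close> by (auto simp: path_V_def)
    then have "S \<subseteq> {b, b + 1}"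
      using ZIr_set_subset_if_forts_meet[OF S, of "{b, b + 1}"] 3 fort_path_meets_adjacent_pair
      by blast
    then have "card S \<le> 2" using card_mono[of "{b, b + 1}" S] by simp
    with \<open>2 \<le> (n - 1) div 2\<close> show ?thesis by linarith
  next
    case 4
    then show ?thesis by (rule card_path_interior_independent)
  qed
qed

lemma ZIr_set_path_odd_vertices: "ZIr_set (path_V n) path_adj {x. odd x \<and> x + 1 < n}"
proof (rule ZIr_setI_complement_forts)
  let ?S = "{x. odd x \<and> x + 1 < n}"
  show "?S \<subseteq> path_V n" by (auto simp: path_V_def)
  fix x assume "x \<in> ?S"
  show "fort (path_V n) path_adj (path_V n - ?S \<union> {x})"
    unfolding fort_def
  proof (intro conjI ballI)
    show "path_V n - ?S \<union> {x} \<noteq> {}" by blast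
    show "path_V n - ?S \<union> {x} \<subseteq> path_V n" using \<open>x \<in> ?S\<close> by (auto simp: path_V_def)
    fix v assume "v \<in> path_V n - (path_V n - ?S \<union> {x})"
    then have v: "odd v" "v + 1 < n" "v \<noteq> x" by (auto simp: path_V_def)
    then have "0 < v" by (intro gr0I) auto
    have "nbhd (path_V n) path_adj v \<inter> (path_V n - ?S \<union> {x}) = {v - 1, v + 1}"
      unfolding nbhd_path using v \<open>0 < v\<close> \<open>x \<in> ?S\<close> by (auto simp: path_V_def)
    then show "card (nbhd (path_V n) path_adj v \<inter> (path_V n - ?S \<union> {x})) \<noteq> 1" by simp
  qed
qed

lemma card_path_odd_vertices: "card {x::nat. odd x \<and> x + 1 < n} = (n - 1) div 2"
proof -
  have "{x. odd x \<and> x + 1 < n} = (\<lambda>i. 2 * i + 1) ` {..<(n - 1) div 2}"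
  proof (rule set_eqI)
    fix x
    show "x \<in> {x. odd x \<and> x + 1 < n} \<longleftrightarrow> x \<in> (\<lambda>i. 2 * i + 1) ` {..<(n - 1) div 2}"
      by (auto elim!: oddE)
  qed
  moreover have "inj_on (\<lambda>i::nat. 2 * i + 1) {..<(n - 1) div 2}" by (rule inj_onI) simp
  ultimately show ?thesis by (simp add: card_image)
qed

lemma Z_path:
  assumes "0 < n"
  shows "Z (path_V n) path_adj = 1"
  unfolding Z_def
proof (rule Min_eqI)
  show "finite (card ` {B. zero_forcing_set (path_V n) path_adj B})"
    by (rule finite_card_image_subsets[of "path_V n"]) (auto simp: zero_forcing_set_def path_V_def)
  show "1 \<in> card ` {B. zero_forcing_set (path_V n) path_adj B}"
    using zero_forcing_set_path_first[OF assms] by force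
  fix y assume "y \<in> card ` {B. zero_forcing_set (path_V n) path_adj B}"
  then obtain B where B: "zero_forcing_set (path_V n) path_adj B" "y = card B" by blast
  have "finite B" using B(1) finite_subset by (auto simp: zero_forcing_set_def path_V_def)
  moreover have "B \<noteq> {}" using zero_forcing_set_nonempty[OF _ B(1)] assms by (auto simp: path_V_def)
  ultimately show "1 \<le> y" using B(2) by (simp add: Suc_le_eq card_gt_0_iff)
qed

lemma zir_path:
  assumes "0 < n"
  shows "zir (path_V n) path_adj = 1"
  unfolding zir_def
proof (rule Min_eqI)
  show "finite (card ` {S. maximal_ZIr_set (path_V n) path_adj S})"
    by (rule finite_card_image_subsets[of "path_V n"]) (auto simp: maximal_ZIr_set_def ZIr_set_def path_V_def)
  have "0 \<in> path_V n" using assms by (simp add: path_V_def)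
  have "maximal_ZIr_set (path_V n) path_adj {0}"
    unfolding maximal_ZIr_set_def
  proof (intro conjI allI impI notI)
    show "ZIr_set (path_V n) path_adj {0}" using \<open>0 \<in> path_V n\<close> by (rule ZIr_set_singleton)
    fix S assume "{0} \<subset> S" "ZIr_set (path_V n) path_adj S"
    then have "S \<subseteq> {0}"
      using ZIr_set_subset_if_forts_meet[of _ _ S "{0}"] fort_path_contains_first by blast
    with \<open>{0} \<subset> S\<close> show False by blast
  qed
  then show "1 \<in> card ` {S. maximal_ZIr_set (path_V n) path_adj S}" by force
  fix y assume "y \<in> card ` {S. maximal_ZIr_set (path_V n) path_adj S}"
  then obtain S where S: "maximal_ZIr_set (path_V n) path_adj S" "y = card S" by blast
  have "finite S" using S(1) finite_subset by (auto simp: maximal_ZIr_set_def ZIr_set_def path_V_def)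
  moreover have "S \<noteq> {}" using maximal_ZIr_set_nonempty[OF \<open>0 \<in> path_V n\<close> S(1)] .
  ultimately show "1 \<le> y" using S(2) by (simp add: Suc_le_eq card_gt_0_iff)
qed

lemma Zbar_path:
  assumes "4 \<le> n"
  shows "Zbar (path_V n) path_adj = 2"
  unfolding Zbar_def
proof (rule Max_eqI)
  show "finite (card ` {B. minimal_zero_forcing_set (path_V n) path_adj B})"
    by (rule finite_card_image_subsets[of "path_V n"])
      (auto simp: minimal_zero_forcing_set_def zero_forcing_set_def path_V_def)
  show "y \<le> 2" if "y \<in> card ` {B. minimal_zero_forcing_set (path_V n) path_adj B}" for y
    using that card_minimal_zero_forcing_set_path[of n] assms by auto
  have "minimal_zero_forcing_set (path_V n) path_adj {1, 2}"
    using minimal_zero_forcing_set_path_interior_pair[of 1 n] assms by (simp add: numeral_2_eq_2)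
  then show "2 \<in> card ` {B. minimal_zero_forcing_set (path_V n) path_adj B}"
    by (intro rev_image_eqI[of "{1, 2}"]) simp_all
qed

lemma ZIR_path:
  assumes "5 \<le> n"
  shows "ZIR (path_V n) path_adj = (n - 1) div 2"
  unfolding ZIR_def
proof (rule Max_eqI)
  show "finite (card ` {S. maximal_ZIr_set (path_V n) path_adj S})"
    by (rule finite_card_image_subsets[of "path_V n"]) (auto simp: maximal_ZIr_set_def ZIr_set_def path_V_def)
  show "y \<le> (n - 1) div 2" if "y \<in> card ` {S. maximal_ZIr_set (path_V n) path_adj S}" for y
    using that card_ZIr_set_path[OF assms] by (auto simp: maximal_ZIr_set_def)
  let ?S = "{x. odd x \<and> x + 1 < n}"
  have "maximal_ZIr_set (path_V n) path_adj ?S"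
    unfolding maximal_ZIr_set_def
  proof (intro conjI allI impI notI)
    show "ZIr_set (path_V n) path_adj ?S" by (rule ZIr_set_path_odd_vertices)
    fix S assume "?S \<subset> S" "ZIr_set (path_V n) path_adj S"
    moreover from this have "finite S" using finite_subset by (auto simp: ZIr_set_def path_V_def)
    ultimately have "card ?S < card S" by (simp add: psubset_card_mono)
    with card_ZIr_set_path[OF assms \<open>ZIr_set (path_V n) path_adj S\<close>] show False
      using card_path_odd_vertices[of n] by linarith
  qed
  then show "(n - 1) div 2 \<in> card ` {S. maximal_ZIr_set (path_V n) path_adj S}"
    using card_path_odd_vertices[of n] by force
qed

theorem proposition3p3:
  shows "(\<forall>n::nat. n \<ge> 1 \<longrightarrow>
            zir (path_V n) path_adj = 1 \<and> Z (path_V n) path_adj = 1)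
       \<and> (\<forall>n::nat. n \<ge> 4 \<longrightarrow> Zbar (path_V n) path_adj = 2)
       \<and> (\<forall>n::nat. n \<ge> 5 \<longrightarrow> ZIR (path_V n) path_adj = (n - 1) div 2)"
  using zir_path Z_path Zbar_path ZIR_path by auto

end
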